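(* For every $\lambda\in P^+$ and every $\mathbf i\in\mathbb N^r\times\mathbb N^r$, $$W(\lambda)^{\ge\mathbf i}=U(\mathfrak n^-[t])^{\ge\mathbf i}\,w_\lambda,\qquad W(\lambda)^{>\mathbf i}=U(\mathfrak n^-[t])^{>\mathbf i}\,w_\lambda.$$
   Context: $\mathfrak g=\mathfrak{sl}_{r+1}(\mathbb C)$, $r\ge2$, $x^+_{i,j}=E_{i,j+1}$, $x^-_{i,j}=E_{j+1,i}$, $\mathfrak n^\pm=\bigoplus\mathbb Cx^\pm_{i,j}$; $\mathfrak g_{r-1}\cong\mathfrak{sl}_r$ the subalgebra generated by $x^\pm_{i,j}$, $1\le i\le j\le r-1$, $\mathfrak n^-_{r-1}=\bigoplus_{1\le i\le j\le r-1}\mathbb Cx^-_{i,j}$; $\mathfrak a[t]=\mathfrak a\otimes\mathbb C[t]$. Weyl module $W(\lambda)$: generated by $w_\lambda$ with $\mathfrak n^+[t]w_\lambda=0$, $(\mathfrak h\otimes t\mathbb C[t])w_\lambda=0$, $hw_\lambda=\lambda(h)w_\lambda$, $(x^-_{i,i})^{m_i+1}w_\lambda=0$. $\mathbf F$: pairs $(\ell,\mathbf s)$, $\mathbf s=(\mathbf s(1)\le\dots\le\mathbf s(\ell))\in\mathbb N^\ell$, $|\mathbf s|=\sum\mathbf s(p)$; $\underline{\mathbf x}^-_r(\underline\ell,\underline{\mathbf s})=\prod_{i=1}^r\prod_p(x^-_{i,r}\otimes t^{\mathbf s_i(p)})$ (product over $i$ in increasing order), $|\underline{\mathbf s}|=(|\mathbf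 s_1|,..,|\mathbf s_r|)$. Order on $\mathbb N^r\times\mathbb N^r$: $(\underline\ell,\underline d)>(\underline\ell',\underline d')$ iff the first $s$ with $\ell_s\neq\ell'_s$ has $\ell_s<\ell'_s$, or $\underline\ell=\underline\ell'$ and the last $s$ with $d_s\ne d'_s$ has $d_s>d'_s$. Definitions: $W(\lambda)^{\ge\mathbf i}=\sum_{(\underline\ell,|\underline{\mathbf s}|)\ge\mathbf i}U(\mathfrak g_{r-1}[t])\underline{\mathbf x}^-_r(\underline\ell,\underline{\mathbf s})w_\lambda$, $U(\mathfrak n^-[t])^{\ge\mathbf i}=\sum_{(\underline\ell,|\underline{\mathbf s}|)\ge\mathbf i}U(\mathfrak n^-_{r-1}[t])\underline{\mathbf x}^-_r(\underline\ell,\underline{\mathbf s})$ (sums over $(\underline\ell,\underline{\mathbf s})\in\mathbf F^r$), and similarly with $>$ in place of $\ge$. *)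

theory Defs
  imports Complex_Main
begin

text \<open>
  A letter (a,b,k) stands for E_{a,b} (x) t^k in gl_{r+1}[t] (indices 1..r+1).
  Elements of the free associative algebra F over these letters are functions
  gen list => complex (only finitely supported ones are ever generated);
  multiplication is the concatenation (Cauchy) product.
  U(sl_{r+1}[t]) = F / I, where I is the two-sided ideal generated by
   - the commutator relations of gl_{r+1}[t],
   - the central elements  sum_a E_{a,a} (x) t^k  (so U(gl[t])/(z_k) = U(sl[t])),
   - the letters with indices outside 1..r+1.
  W(lambda) = F / (I + left ideal generated by the Weyl relations); a subspace
  X w_lambda of W(lambda) is represented by its preimage X + ideal in F.
\<close>

type_synonym gen = "nat \<times> nat \<times> nat"
type_synonym fa = "gen list \<Rightarrow> complex"

definition word :: "gen list \<Rightarrow> fa" where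
  "word u = (\<lambda>v. if v = u then 1 else 0)"

definition letter :: "gen \<Rightarrow> fa" where
  "letter g = word [g]"

definition fa_zero :: fa where "fa_zero = (\<lambda>_. 0)"
definition fa_add :: "fa \<Rightarrow> fa \<Rightarrow> fa" where "fa_add p q = (\<lambda>w. p w + q w)"
definition fa_smult :: "complex \<Rightarrow> fa \<Rightarrow> fa" where "fa_smult c p = (\<lambda>w. c * p w)"
definition fa_sub :: "fa \<Rightarrow> fa \<Rightarrow> fa" where "fa_sub p q = (\<lambda>w. p w - q w)"

definition fa_mult :: "fa \<Rightarrow> fa \<Rightarrow> fa" where
  "fa_mult p q = (\<lambda>w. \<Sum>i\<le>length w. p (take i w) * q (drop i w))"

definition fa_prod :: "fa list \<Rightarrow> fa" where
  "fa_prod xs = foldr fa_mult xs (word [])"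

inductive_set lspan :: "fa set \<Rightarrow> fa set" for S where
  lspan_zero: "fa_zero \<in> lspan S"
| lspan_gen: "p \<in> S \<Longrightarrow> p \<in> lspan S"
| lspan_add: "p \<in> lspan S \<Longrightarrow> q \<in> lspan S \<Longrightarrow> fa_add p q \<in> lspan S"
| lspan_smult: "p \<in> lspan S \<Longrightarrow> fa_smult c p \<in> lspan S"

definition valid_gen :: "nat \<Rightarrow> gen \<Rightarrow> bool" where
  "valid_gen r g = (case g of (a, b, k) \<Rightarrow> 1 \<le> a \<and> a \<le> r + 1 \<and> 1 \<le> b \<and> b \<le> r + 1)"

definition bracket :: "gen \<Rightarrow> gen \<Rightarrow> fa" where
  "bracket g1 g2 = (case g1 of (a, b, k) \<Rightarrow> case g2 of (c, d, l) \<Rightarrow>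
     fa_sub (if b = c then letter (a, d, k + l) else fa_zero)
            (if d = a then letter (c, b, k + l) else fa_zero))"

definition two_sided_gens :: "nat \<Rightarrow> fa set" where
  "two_sided_gens r =
     {fa_sub (fa_sub (fa_mult (letter g1) (letter g2)) (fa_mult (letter g2) (letter g1)))
             (bracket g1 g2) | g1 g2. valid_gen r g1 \<and> valid_gen r g2}
   \<union> {(\<lambda>w. \<Sum>a\<in>{1..r+1}. letter (a, a, k) w) | k. True}
   \<union> {letter g | g. \<not> valid_gen r g}"

definition hgen :: "nat \<Rightarrow> nat \<Rightarrow> fa" where
  "hgen i k = fa_sub (letter (i, i, k)) (letter (i + 1, i + 1, k))"

definition w_lambda :: fa where "w_lambda = word []"

text \<open>Defining relations of W(lambda), lambda = sum_i m_i omega_i, acting on w_lambda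
  (x^-_{i,i} = E_{i+1,i}, x^+_{i,j} = E_{i,j+1}).\<close>
definition weyl_left_gens :: "nat \<Rightarrow> (nat \<Rightarrow> nat) \<Rightarrow> fa set" where
  "weyl_left_gens r m =
     {letter (a, b, k) | a b k. 1 \<le> a \<and> a < b \<and> b \<le> r + 1}
   \<union> {hgen i k | i k. 1 \<le> i \<and> i \<le> r \<and> 1 \<le> k}
   \<union> {fa_sub (hgen i 0) (fa_smult (of_nat (m i)) (word [])) | i. 1 \<le> i \<and> i \<le> r}
   \<union> {fa_prod (replicate (m i + 1) (letter (i + 1, i, 0))) | i. 1 \<le> i \<and> i \<le> r}"

definition weyl_ideal :: "nat \<Rightarrow> (nat \<Rightarrow> nat) \<Rightarrow> fa set" where
  "weyl_ideal r m = lspan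
     ({fa_mult (fa_mult (word u) g) (word v) | u g v. g \<in> two_sided_gens r}
      \<union> {fa_mult (word u) g | u g. g \<in> weyl_left_gens r m})"

definition weyl_sub :: "nat \<Rightarrow> (nat \<Rightarrow> nat) \<Rightarrow> fa set \<Rightarrow> fa set" where
  "weyl_sub r m X = {fa_add p q | p q. p \<in> lspan X \<and> q \<in> weyl_ideal r m}"

text \<open>Words in the generators x^pm_{i,j} (1<=i<=j<=r-1) of g_{r-1} = sl_r, i.e. E_{a,b}, a /= b in 1..r;
  and in the x^-_{i,j} (1<=i<=j<=r-1), i.e. E_{a,b} with 1 <= b < a <= r.\<close>
definition g_sub_word :: "nat \<Rightarrow> gen list \<Rightarrow> bool" where
  "g_sub_word r u = (\<forall>(a, b, k) \<in> set u. 1 \<le> a \<and> a \<le> r \<and> 1 \<le> b \<and> b \<le> r \<and> a \<noteq> b)"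

definition nminus_sub_word :: "nat \<Rightarrow> gen list \<Rightarrow> bool" where
  "nminus_sub_word r u = (\<forall>(a, b, k) \<in> set u. 1 \<le> b \<and> b < a \<and> a \<le> r)"

text \<open>(l, s) in F^r: for each i in 1..r a nondecreasing list s_i; l_i = length s_i\<close>
definition in_Fr :: "nat \<Rightarrow> (nat \<Rightarrow> nat list) \<Rightarrow> bool" where
  "in_Fr r S = (\<forall>i\<in>{1..r}. sorted (S i))"

definition ell :: "(nat \<Rightarrow> nat list) \<Rightarrow> nat \<Rightarrow> nat" where "ell S = (\<lambda>i. length (S i))"
definition degs :: "(nat \<Rightarrow> nat list) \<Rightarrow> nat \<Rightarrow> nat" where "degs S = (\<lambda>i. sum_list (S i))"

text \<open>x^-_r(l,s) = prod_{i=1}^r prod_p (x^-_{i,r} (x) t^{s_i(p)}), x^-_{i,r} = E_{r+1,i}\<close>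
definition xr :: "nat \<Rightarrow> (nat \<Rightarrow> nat list) \<Rightarrow> fa" where
  "xr r S = fa_prod (concat (map (\<lambda>i. map (\<lambda>s. letter (r + 1, i, s)) (S i)) [1..<r+1]))"

definition idx_gt :: "nat \<Rightarrow> (nat \<Rightarrow> nat) \<times> (nat \<Rightarrow> nat) \<Rightarrow> (nat \<Rightarrow> nat) \<times> (nat \<Rightarrow> nat) \<Rightarrow> bool" where
  "idx_gt r x y = (case x of (l, d) \<Rightarrow> case y of (l', d') \<Rightarrow>
     (\<exists>s\<in>{1..r}. l s \<noteq> l' s \<and> (\<forall>q\<in>{1..<s}. l q = l' q) \<and> l s < l' s)
     \<or> ((\<forall>s\<in>{1..r}. l s = l' s) \<and>
        (\<exists>s\<in>{1..r}. d s \<noteq> d' s \<and> (\<forall>q\<in>{s<..r}. d q = d' q) \<and> d s > d' s)))"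

definition idx_ge :: "nat \<Rightarrow> (nat \<Rightarrow> nat) \<times> (nat \<Rightarrow> nat) \<Rightarrow> (nat \<Rightarrow> nat) \<times> (nat \<Rightarrow> nat) \<Rightarrow> bool" where
  "idx_ge r x y = (idx_gt r x y \<or>
     (\<forall>s\<in>{1..r}. fst x s = fst y s \<and> snd x s = snd y s))"

text \<open>sum over (l,s) in F^r with rel (l,|s|) i of  U(word-subalgebra) x^-_r(l,s) w_lambda,
  as a subspace of W(lambda) (preimage in F)\<close>
definition filt :: "nat \<Rightarrow> (nat \<Rightarrow> nat) \<Rightarrow> (nat \<Rightarrow> gen list \<Rightarrow> bool)
   \<Rightarrow> (nat \<Rightarrow> (nat \<Rightarrow> nat) \<times> (nat \<Rightarrow> nat) \<Rightarrow> (nat \<Rightarrow> nat) \<times> (nat \<Rightarrow> nat) \<Rightarrow> bool)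
   \<Rightarrow> (nat \<Rightarrow> nat) \<times> (nat \<Rightarrow> nat) \<Rightarrow> fa set" where
  "filt r m subw rel i = weyl_sub r m
     {fa_mult (fa_mult (fa_prod (map letter u)) (xr r S)) w_lambda | u S.
        subw r u \<and> in_Fr r S \<and> rel r (ell S, degs S) i}"

abbreviation W_ge where "W_ge r m i \<equiv> filt r m g_sub_word idx_ge i"
abbreviation W_gt where "W_gt r m i \<equiv> filt r m g_sub_word idx_gt i"
abbreviation Un_ge where "Un_ge r m i \<equiv> filt r m nminus_sub_word idx_ge i"
abbreviation Un_gt where "Un_gt r m i \<equiv> filt r m nminus_sub_word idx_gt i"

end

theory Submission
  imports Defs "HOL-Library.Function_Algebras" "HOL-Library.Multiset"
begin

text \<open>
  The inclusion from right to left is clear. Conversely, in u x^-_r(l,s) w_lambda with u a word in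
  g_{r-1}[t], move every letter of u that is not in n^-_{r-1}[t] to the right, through the letters
  of n^-_{r-1}[t] and the letters x^-_{i,r} (x) t^s, until it reaches w_lambda. A raising letter
  E_{ab} (x) t^k (a < b) annihilates w_lambda, and its commutator with x^-_{a,r} (x) t^s is, up to
  sign, x^-_{b,r} (x) t^{k+s}: a letter moves from column a to column b, which makes the index
  (l, |s|) strictly larger. A Cartan difference (E_{aa} - E_{bb}) (x) t^k acts on w_lambda by a
  scalar, and its commutator with x^-_{i,r} (x) t^s only raises a degree, which does not make the
  index smaller. Commutators with letters of n^-_{r-1}[t] stay in g_{r-1}[t]. As both filtrations
  are indexed by upward closed sets of indices, every term produced stays in U(n^-[t])^{>=i}
  w_lambda, once the commuting letters x^-_{i,r} (x) t^s are put back in the order of x^-_r.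
\<close>

section \<open>The free algebra and its linear spans\<close>

lemma fa_zero_eq [simp]: "fa_zero = 0"
  by (simp add: fa_zero_def fun_eq_iff)

lemma fa_add_eq [simp]: "fa_add p q = p + q"
  by (simp add: fa_add_def fun_eq_iff)

lemma fa_sub_eq [simp]: "fa_sub p q = p - q"
  by (simp add: fa_sub_def fun_eq_iff)

lemma word_mult: "fa_mult (word u) (word v) = word (u @ v)"
proof (rule ext)
  fix w :: "gen list"
  have "\<And>i. i \<le> length w \<Longrightarrow> word u (take i w) * word v (drop i w) =
      (if i = length u \<and> w = u @ v then 1 else 0)"
    by (auto simp: word_def)
  then have "fa_mult (word u) (word v) w = (\<Sum>i\<le>length w. if i = length u \<and> w = u @ v then 1 else 0)"
    unfolding fa_mult_def by (intro sum.cong) auto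
  also have "\<dots> = word (u @ v) w"
    by (auto simp: word_def)
  finally show "fa_mult (word u) (word v) w = word (u @ v) w" .
qed

lemma fa_mult_assoc: "fa_mult (fa_mult p q) s = fa_mult p (fa_mult q s)"
proof (rule ext)
  fix w :: "gen list"
  define n where "n = length w"
  define F where "F = (\<lambda>i j. p (take j w) * q (take (i - j) (drop j w)) * s (drop i w))"
  have "fa_mult (fa_mult p q) s w = (\<Sum>i\<le>n. \<Sum>j\<in>{j\<in>{..n}. j \<le> i}. F i j)"
  proof -
    have "\<And>i. i \<le> n \<Longrightarrow> {j\<in>{..n}. j \<le> i} = {..i}" by auto
    then show ?thesis
      unfolding fa_mult_def F_def n_def
      by (intro sum.cong) (auto simp: sum_distrib_right min_def take_drop intro!: sum.cong)
  qed
  also have "\<dots> = (\<Sum>j\<le>n. \<Sum>i\<in>{i\<in>{..n}. j \<le> i}. F i j)"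
    by (rule sum.swap_restrict) auto
  also have "\<dots> = fa_mult p (fa_mult q s) w"
  proof -
    have "(\<Sum>i\<in>{i\<in>{..n}. j \<le> i}. F i j) = (\<Sum>k\<le>n - j. F (j + k) j)" if "j \<le> n" for j
    proof -
      have "{i\<in>{..n}. j \<le> i} = (\<lambda>k. j + k) ` {..n - j}"
        using that by (auto simp: image_iff) (metis atMost_iff diff_le_mono le_add_diff_inverse)
      then show ?thesis
        by (simp add: sum.reindex)
    qed
    then show ?thesis
      unfolding fa_mult_def F_def n_def
      by (intro sum.cong) (auto simp: sum_distrib_left mult.assoc add.commute)
  qed
  finally show "fa_mult (fa_mult p q) s w = fa_mult p (fa_mult q s) w" .
qed

lemma fa_mult_add_right: "fa_mult p (q + s) = fa_mult p q + fa_mult p s"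
  by (simp add: fa_mult_def fun_eq_iff distrib_left sum.distrib)

lemma fa_mult_diff_right: "fa_mult p (q - s) = fa_mult p q - fa_mult p s"
  by (simp add: fa_mult_def fun_eq_iff right_diff_distrib sum_subtractf)

lemma fa_mult_diff_left: "fa_mult (p - q) s = fa_mult p s - fa_mult q s"
  by (simp add: fa_mult_def fun_eq_iff left_diff_distrib sum_subtractf)

lemma fa_mult_zero_right [simp]: "fa_mult p 0 = 0"
  by (simp add: fa_mult_def fun_eq_iff)

lemma fa_mult_zero_left [simp]: "fa_mult 0 p = 0"
  by (simp add: fa_mult_def fun_eq_iff)

lemma fa_mult_smult_right: "fa_mult p (fa_smult c q) = fa_smult c (fa_mult p q)"
  by (simp add: fa_mult_def fa_smult_def fun_eq_iff sum_distrib_left algebra_simps)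

lemma fa_prod_map_letter: "fa_prod (map letter u) = word u"
  by (induction u) (simp_all add: fa_prod_def letter_def word_mult)

interpretation fa: module fa_smult
  by unfold_locales (simp_all add: fa_smult_def fun_eq_iff algebra_simps)

lemma lspan_eq_span: "lspan S = fa.span S"
proof
  show "lspan S \<subseteq> fa.span S"
  proof
    fix p assume "p \<in> lspan S"
    then show "p \<in> fa.span S"
    proof induction
      case lspan_zero
      show ?case unfolding fa_zero_eq by (rule fa.span_zero)
    next
      case (lspan_add p q)
      show ?case unfolding fa_add_eq by (rule fa.span_add[OF lspan_add.IH])
    qed (auto intro: fa.span_base fa.span_scale)
  qed
  have "fa.subspace (lspan S)"
    unfolding fa.subspace_def by (metis lspan.intros fa_zero_eq fa_add_eq)
  then show "fa.span S \<subseteq> lspan S"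
    by (intro fa.span_minimal) (auto intro: lspan_gen)
qed

lemma span_mult_left:
  assumes "p \<in> fa.span A" and "\<And>x. x \<in> A \<Longrightarrow> fa_mult q x \<in> fa.span B"
  shows "fa_mult q p \<in> fa.span B"
proof -
  interpret module_hom fa_smult fa_smult "fa_mult q"
    by (simp add: module_hom_iff fa.module_axioms fa_mult_add_right fa_mult_smult_right)
  have "fa_mult q ` fa.span A = fa.span (fa_mult q ` A)"
    by (rule span_image[symmetric])
  also have "\<dots> \<subseteq> fa.span B"
    using assms(2) by (metis fa.span_minimal fa.subspace_span image_subsetI)
  finally show ?thesis using assms(1) by blast
qed

lemma span_of_diff: "p - q \<in> fa.span S \<Longrightarrow> q \<in> fa.span S \<Longrightarrow> p \<in> fa.span S"
  by (metis diff_add_cancel fa.span_add)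

lemma span_diff_trans: "p - q \<in> fa.span S \<Longrightarrow> q - s \<in> fa.span S \<Longrightarrow> p - s \<in> fa.span S"
proof -
  assume "p - q \<in> fa.span S" "q - s \<in> fa.span S"
  then have "(p - q) + (q - s) \<in> fa.span S" by (rule fa.span_add)
  moreover have "(p - q) + (q - s) = p - s" by simp
  ultimately show ?thesis by simp
qed

section \<open>The defining relations of W(lambda)\<close>

definition weyl_ideal_gens :: "nat \<Rightarrow> (nat \<Rightarrow> nat) \<Rightarrow> fa set" where
  "weyl_ideal_gens r m =
     {fa_mult (fa_mult (word u) g) (word v) | u g v. g \<in> two_sided_gens r}
   \<union> {fa_mult (word u) g | u g. g \<in> weyl_left_gens r m}"

lemma weyl_sub_eq_span: "weyl_sub r m X = fa.span (X \<union> weyl_ideal_gens r m)"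
  by (simp add: weyl_sub_def weyl_ideal_def weyl_ideal_gens_def lspan_eq_span fa.span_Un)

lemma mult_word_weyl_ideal_gens:
  "x \<in> weyl_ideal_gens r m \<Longrightarrow> fa_mult (word u) x \<in> weyl_ideal_gens r m"
  unfolding weyl_ideal_gens_def
  by (auto simp: fa_mult_assoc[symmetric] word_mult) (metis fa_mult_assoc word_mult)+

lemma bracket_between_words:
  "fa_mult (word u) (fa_mult (bracket (a, b, k) (c, d, l)) (word v)) =
     (if b = c then word (u @ (a, d, k + l) # v) else 0)
   - (if d = a then word (u @ (c, b, k + l) # v) else 0)"
  by (simp add: bracket_def fa_mult_diff_left fa_mult_diff_right letter_def word_mult)

lemma word_commutator:
  assumes "valid_gen r g1" "valid_gen r g2"
  shows "word (u @ g1 # g2 # v) - word (u @ g2 # g1 # v)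
     - fa_mult (word u) (fa_mult (bracket g1 g2) (word v)) \<in> fa.span (weyl_ideal_gens r m)"
proof -
  define c where "c = fa_sub (fa_sub (fa_mult (letter g1) (letter g2)) (fa_mult (letter g2) (letter g1)))
     (bracket g1 g2)"
  have "c \<in> two_sided_gens r"
    using assms unfolding c_def two_sided_gens_def by blast
  then have "fa_mult (fa_mult (word u) c) (word v) \<in> weyl_ideal_gens r m"
    unfolding weyl_ideal_gens_def by blast
  moreover have "fa_mult (fa_mult (word u) c) (word v) = word (u @ g1 # g2 # v)
     - word (u @ g2 # g1 # v) - fa_mult (word u) (fa_mult (bracket g1 g2) (word v))"
    by (simp add: c_def fa_mult_assoc fa_mult_diff_left fa_mult_diff_right letter_def word_mult)
  ultimately show ?thesis by (metis fa.span_base)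
qed

lemma commute_letters_in_span:
  assumes "valid_gen r g1" "valid_gen r g2"
    and "word (u @ g2 # g1 # v) \<in> fa.span (Y \<union> weyl_ideal_gens r m)"
    and "fa_mult (word u) (fa_mult (bracket g1 g2) (word v)) \<in> fa.span (Y \<union> weyl_ideal_gens r m)"
  shows "word (u @ g1 # g2 # v) \<in> fa.span (Y \<union> weyl_ideal_gens r m)"
proof -
  have "word (u @ g1 # g2 # v) - word (u @ g2 # g1 # v)
     - fa_mult (word u) (fa_mult (bracket g1 g2) (word v)) \<in> fa.span (Y \<union> weyl_ideal_gens r m)"
    using word_commutator[OF assms(1,2)] fa.span_mono[of _ "Y \<union> _"] by blast
  then show ?thesis using assms(3,4) by (metis span_of_diff)
qed

lemma commute_letters_diff_in_span:
  assumes "valid_gen r g1" "valid_gen r g1'" "valid_gen r g2"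
    and "word (u @ g2 # g1 # v) - word (u @ g2 # g1' # v) \<in> fa.span (Y \<union> weyl_ideal_gens r m)"
    and "fa_mult (word u) (fa_mult (bracket g1 g2) (word v)) \<in> fa.span (Y \<union> weyl_ideal_gens r m)"
    and "fa_mult (word u) (fa_mult (bracket g1' g2) (word v)) \<in> fa.span (Y \<union> weyl_ideal_gens r m)"
  shows "word (u @ g1 # g2 # v) - word (u @ g1' # g2 # v) \<in> fa.span (Y \<union> weyl_ideal_gens r m)"
proof -
  let ?S = "fa.span (Y \<union> weyl_ideal_gens r m)"
  have "word (u @ g # g2 # v) - word (u @ g2 # g # v)
     - fa_mult (word u) (fa_mult (bracket g g2) (word v)) \<in> ?S" if "valid_gen r g" for g
    using word_commutator[OF that assms(3)] fa.span_mono[of _ "Y \<union> _"] by blast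
  note c1 = this[OF assms(1)] and c2 = this[OF assms(2)]
  have "word (u @ g1 # g2 # v) - word (u @ g1' # g2 # v) =
      (word (u @ g1 # g2 # v) - word (u @ g2 # g1 # v) - fa_mult (word u) (fa_mult (bracket g1 g2) (word v)))
    - (word (u @ g1' # g2 # v) - word (u @ g2 # g1' # v) - fa_mult (word u) (fa_mult (bracket g1' g2) (word v)))
    + (word (u @ g2 # g1 # v) - word (u @ g2 # g1' # v))
    + fa_mult (word u) (fa_mult (bracket g1 g2) (word v)) - fa_mult (word u) (fa_mult (bracket g1' g2) (word v))"
    by (simp add: algebra_simps)
  then show ?thesis
    using c1 c2 assms(4-6) by (metis fa.span_add fa.span_diff)
qed

lemma weyl_left_gen_in_ideal_gens:
  "g \<in> weyl_left_gens r m \<Longrightarrow> fa_mult (word u) g \<in> weyl_ideal_gens r m"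
  unfolding weyl_ideal_gens_def by blast

lemma raising_last_in_ideal_gens:
  assumes "1 \<le> a" "a < b" "b \<le> r + 1"
  shows "word (u @ [(a, b, k)]) \<in> weyl_ideal_gens r m"
proof -
  have "letter (a, b, k) \<in> weyl_left_gens r m"
    using assms unfolding weyl_left_gens_def by blast
  then show ?thesis
    using weyl_left_gen_in_ideal_gens by (fastforce simp: letter_def word_mult)
qed

text \<open>In W(lambda), u (E_{aa} - E_{bb}) t^k w_lambda is a multiple of u w_lambda.\<close>

lemma hgen_last_in_span:
  assumes "1 \<le> i" "i \<le> r" and u: "word u \<in> fa.span (Y \<union> weyl_ideal_gens r m)"
  shows "word (u @ [(i, i, k)]) - word (u @ [(i + 1, i + 1, k)]) \<in> fa.span (Y \<union> weyl_ideal_gens r m)"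
proof -
  have hgen: "fa_mult (word u) (hgen i k) = word (u @ [(i, i, k)]) - word (u @ [(i + 1, i + 1, k)])"
    by (simp add: hgen_def letter_def fa_mult_diff_right word_mult)
  show ?thesis
  proof (cases "k = 0")
    case False
    then have "hgen i k \<in> {hgen i k | i k. 1 \<le> i \<and> i \<le> r \<and> 1 \<le> k}"
      using assms by (intro CollectI exI[of _ i] exI[of _ k]) auto
    then have "hgen i k \<in> weyl_left_gens r m"
      unfolding weyl_left_gens_def by blast
    then show ?thesis
      unfolding hgen[symmetric] by (intro fa.span_base UnI2 weyl_left_gen_in_ideal_gens)
  next
    case True
    define g where "g = fa_sub (hgen i 0) (fa_smult (of_nat (m i)) (word []))"
    have "g \<in> weyl_left_gens r m"
      using assms unfolding weyl_left_gens_def g_def by blast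
    then have "fa_mult (word u) g \<in> fa.span (Y \<union> weyl_ideal_gens r m)"
      by (intro fa.span_base UnI2 weyl_left_gen_in_ideal_gens)
    moreover have "fa_mult (word u) g = fa_mult (word u) (hgen i 0) - fa_smult (of_nat (m i)) (word u)"
      by (simp add: g_def fa_mult_diff_right fa_mult_smult_right word_mult)
    ultimately show ?thesis
      using hgen True fa.span_scale[OF u] by (metis span_of_diff)
  qed
qed

lemma diag_last_in_span:
  assumes "1 \<le> a" "a \<le> r" "1 \<le> b" "b \<le> r" and u: "word u \<in> fa.span (Y \<union> weyl_ideal_gens r m)"
  shows "word (u @ [(a, a, k)]) - word (u @ [(b, b, k)]) \<in> fa.span (Y \<union> weyl_ideal_gens r m)"
proof -
  let ?S = "fa.span (Y \<union> weyl_ideal_gens r m)"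
  have telescope: "word (u @ [(a, a, k)]) - word (u @ [(a + n, a + n, k)]) \<in> ?S"
    if "1 \<le> a" "a + n \<le> r" for a n
    using that(2)
  proof (induction n)
    case (Suc n)
    have "word (u @ [(a, a, k)]) - word (u @ [(a + n, a + n, k)]) \<in> ?S"
      using Suc.prems by (intro Suc.IH) simp
    moreover have "word (u @ [(a + n, a + n, k)]) - word (u @ [(a + n + 1, a + n + 1, k)]) \<in> ?S"
      using Suc.prems that(1) u by (intro hgen_last_in_span) simp_all
    ultimately show ?case
      by (simp only: add_Suc_right Suc_eq_plus1 add.assoc[symmetric] span_diff_trans)
  qed (simp add: fa.span_zero)
  show ?thesis
  proof (cases "a \<le> b")
    case True
    then show ?thesis using telescope[of a "b - a"] assms by simp
  next
    case False
    then have "word (u @ [(b, b, k)]) - word (u @ [(a, a, k)]) \<in> ?S"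
      using telescope[of b "a - b"] assms by simp
    then show ?thesis using fa.span_neg by fastforce
  qed
qed

section \<open>Products of the letters x^-_{i,r} and the order on indices\<close>

text \<open>A pair (i, s) in L stands for the letter x^-_{i,r} (x) t^s = E_{r+1,i} (x) t^s; the index
  (l, d) of the corresponding product of such letters counts, for each column i, their number l i
  and their total degree d i.\<close>

definition xr_word :: "nat \<Rightarrow> (nat \<times> nat) list \<Rightarrow> gen list" where
  "xr_word r L = map (\<lambda>(i, s). (r + 1, i, s)) L"

lemma xr_word_simps [simp]:
  "xr_word r [] = []"
  "xr_word r ((i, s) # L) = (r + 1, i, s) # xr_word r L"
  "xr_word r (L1 @ L2) = xr_word r L1 @ xr_word r L2"
  by (simp_all add: xr_word_def)

definition cols_valid :: "nat \<Rightarrow> (nat \<times> nat) list \<Rightarrow> bool" where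
  "cols_valid r L \<longleftrightarrow> (\<forall>(i, s) \<in> set L. 1 \<le> i \<and> i \<le> r)"

lemma cols_valid_simps [simp]:
  "cols_valid r []"
  "cols_valid r ((i, s) # L) \<longleftrightarrow> 1 \<le> i \<and> i \<le> r \<and> cols_valid r L"
  "cols_valid r (L1 @ L2) \<longleftrightarrow> cols_valid r L1 \<and> cols_valid r L2"
  by (auto simp: cols_valid_def)

definition col_index :: "(nat \<times> nat) list \<Rightarrow> (nat \<Rightarrow> nat) \<times> (nat \<Rightarrow> nat)" where
  "col_index L = (\<lambda>i. length (filter (\<lambda>p. fst p = i) L), \<lambda>i. sum_list (map snd (filter (\<lambda>p. fst p = i) L)))"

definition agree :: "nat \<Rightarrow> (nat \<Rightarrow> nat) \<Rightarrow> (nat \<Rightarrow> nat) \<Rightarrow> bool" where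
  "agree r f g \<longleftrightarrow> (\<forall>s\<in>{1..r}. f s = g s)"

definition lex_less :: "nat \<Rightarrow> (nat \<Rightarrow> nat) \<Rightarrow> (nat \<Rightarrow> nat) \<Rightarrow> bool" where
  "lex_less r l l' \<longleftrightarrow> (\<exists>s\<in>{1..r}. (\<forall>q\<in>{1..<s}. l q = l' q) \<and> l s < l' s)"

definition colex_greater :: "nat \<Rightarrow> (nat \<Rightarrow> nat) \<Rightarrow> (nat \<Rightarrow> nat) \<Rightarrow> bool" where
  "colex_greater r d d' \<longleftrightarrow> (\<exists>s\<in>{1..r}. (\<forall>q\<in>{s<..r}. d q = d' q) \<and> d' s < d s)"

lemma idx_gt_iff:
  "idx_gt r x y \<longleftrightarrow> lex_less r (fst x) (fst y) \<or> agree r (fst x) (fst y) \<and> colex_greater r (snd x) (snd y)"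
proof -
  have "(\<exists>s\<in>A. f s \<noteq> g s \<and> Q s \<and> R s) \<longleftrightarrow> (\<exists>s\<in>A. Q s \<and> R s)"
    if "\<And>s. R s \<Longrightarrow> f s \<noteq> g s" for A and f g :: "nat \<Rightarrow> nat" and Q R
    using that by blast
  from this[of "\<lambda>s. fst x s < fst y s"] this[of "\<lambda>s. snd y s < snd x s"] show ?thesis
    by (cases x, cases y) (simp add: idx_gt_def lex_less_def colex_greater_def agree_def)
qed

lemma idx_ge_iff:
  "idx_ge r x y \<longleftrightarrow> idx_gt r x y \<or> agree r (fst x) (fst y) \<and> agree r (snd x) (snd y)"
  by (auto simp: idx_ge_def agree_def)

lemma lex_less_trans:
  assumes "lex_less r l l'" "lex_less r l' l''"
  shows "lex_less r l l''"
proof -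
  obtain s1 where s1: "s1 \<in> {1..r}" "\<forall>q\<in>{1..<s1}. l q = l' q" "l s1 < l' s1"
    using assms(1) unfolding lex_less_def by blast
  obtain s2 where s2: "s2 \<in> {1..r}" "\<forall>q\<in>{1..<s2}. l' q = l'' q" "l' s2 < l'' s2"
    using assms(2) unfolding lex_less_def by blast
  have "\<forall>q\<in>{1..<min s1 s2}. l q = l'' q" and "l (min s1 s2) < l'' (min s1 s2)"
    using s1 s2 by (auto simp: min_def) (cases s1 s2 rule: linorder_cases; auto)
  then show ?thesis
    using s1 s2 unfolding lex_less_def by (intro bexI[of _ "min s1 s2"]) auto
qed

lemma colex_greater_trans:
  assumes "colex_greater r d d'" "colex_greater r d' d''"
  shows "colex_greater r d d''"
proof -
  obtain s1 where s1: "s1 \<in> {1..r}" "\<forall>q\<in>{s1<..r}. d q = d' q" "d' s1 < d s1"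
    using assms(1) unfolding colex_greater_def by blast
  obtain s2 where s2: "s2 \<in> {1..r}" "\<forall>q\<in>{s2<..r}. d' q = d'' q" "d'' s2 < d' s2"
    using assms(2) unfolding colex_greater_def by blast
  have "\<forall>q\<in>{max s1 s2<..r}. d q = d'' q" and "d'' (max s1 s2) < d (max s1 s2)"
    using s1 s2 by (auto simp: max_def) (cases s1 s2 rule: linorder_cases; auto)
  then show ?thesis
    using s1 s2 unfolding colex_greater_def by (intro bexI[of _ "max s1 s2"]) auto
qed

lemma lex_less_agree_left: "agree r l l' \<Longrightarrow> lex_less r l' l'' \<Longrightarrow> lex_less r l l''"
  and lex_less_agree_right: "lex_less r l l' \<Longrightarrow> agree r l' l'' \<Longrightarrow> lex_less r l l''"
  and colex_greater_agree_left: "agree r d d' \<Longrightarrow> colex_greater r d' d'' \<Longrightarrow> colex_greater r d d''"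
  and colex_greater_agree_right: "colex_greater r d d' \<Longrightarrow> agree r d' d'' \<Longrightarrow> colex_greater r d d''"
  unfolding agree_def lex_less_def colex_greater_def by fastforce+

lemma agree_trans: "agree r f g \<Longrightarrow> agree r g h \<Longrightarrow> agree r f h"
  and agree_sym: "agree r f g \<Longrightarrow> agree r g f"
  by (simp_all add: agree_def)

lemma idx_gt_trans: "idx_gt r x y \<Longrightarrow> idx_gt r y z \<Longrightarrow> idx_gt r x z"
  unfolding idx_gt_iff
  using lex_less_trans colex_greater_trans lex_less_agree_left lex_less_agree_right agree_trans
  by blast

lemma idx_gt_ge_trans: "idx_gt r x y \<Longrightarrow> idx_ge r y z \<Longrightarrow> idx_gt r x z"
  unfolding idx_ge_iff
  using idx_gt_trans lex_less_agree_right colex_greater_agree_right agree_trans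
  unfolding idx_gt_iff by blast

lemma idx_gt_agree: 
  "agree r (fst x) (fst x') \<Longrightarrow> agree r (snd x) (snd x') \<Longrightarrow> idx_gt r x z \<Longrightarrow> idx_gt r x' z"
  unfolding idx_gt_iff
  using lex_less_agree_left colex_greater_agree_left agree_trans agree_sym by blast

lemma idx_ge_agree:
  "agree r (fst x) (fst x') \<Longrightarrow> agree r (snd x) (snd x') \<Longrightarrow> idx_ge r x z \<Longrightarrow> idx_ge r x' z"
  unfolding idx_ge_iff
  using idx_gt_agree agree_trans agree_sym by blast

lemma idx_gt_raise_col:
  assumes "1 \<le> a" "a < b" "b \<le> r"
  shows "idx_gt r (col_index (L1 @ (b, t) # L2)) (col_index (L1 @ (a, s) # L2))"
proof -
  have "lex_less r (fst (col_index (L1 @ (b, t) # L2))) (fst (col_index (L1 @ (a, s) # L2)))"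
    unfolding lex_less_def col_index_def using assms by (intro bexI[of _ a]) auto
  then show ?thesis unfolding idx_gt_iff by blast
qed

lemma idx_gt_raise_deg:
  assumes "1 \<le> i" "i \<le> r" "0 < k"
  shows "idx_gt r (col_index (L1 @ (i, s + k) # L2)) (col_index (L1 @ (i, s) # L2))"
proof -
  have "agree r (fst (col_index (L1 @ (i, s + k) # L2))) (fst (col_index (L1 @ (i, s) # L2)))"
    unfolding agree_def col_index_def by auto
  moreover have "colex_greater r (snd (col_index (L1 @ (i, s + k) # L2))) (snd (col_index (L1 @ (i, s) # L2)))"
    unfolding colex_greater_def col_index_def using assms by (intro bexI[of _ i]) auto
  ultimately show ?thesis unfolding idx_gt_iff by blast
qed

definition idx_upclosed :: "nat \<Rightarrow> ((nat \<Rightarrow> nat) \<times> (nat \<Rightarrow> nat) \<Rightarrow> bool) \<Rightarrow> bool" where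
  "idx_upclosed r P \<longleftrightarrow> (\<forall>j j'. P j \<longrightarrow> idx_gt r j' j \<longrightarrow> P j')"

lemma idx_upclosedD: "idx_upclosed r P \<Longrightarrow> P j \<Longrightarrow> idx_gt r j' j \<Longrightarrow> P j'"
  unfolding idx_upclosed_def by blast

lemma idx_upclosed_raise_deg:
  assumes "idx_upclosed r P" "1 \<le> i" "i \<le> r" "P (col_index (L1 @ (i, s) # L2))"
  shows "P (col_index (L1 @ (i, s + k) # L2))"
proof (cases "k = 0")
  case False
  then show ?thesis
    using assms idx_gt_raise_deg[of i r k L1 s L2] by (blast intro: idx_upclosedD)
qed (use assms in simp)

section \<open>Straightening\<close>

definition nminus_xr_words :: "nat \<Rightarrow> ((nat \<Rightarrow> nat) \<times> (nat \<Rightarrow> nat) \<Rightarrow> bool) \<Rightarrow> fa set" where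
  "nminus_xr_words r P =
     {word (v @ xr_word r L) | v L. nminus_sub_word r v \<and> cols_valid r L \<and> P (col_index L)}"

text \<open>The preimage in the free algebra of the span of the vectors v x w_lambda, where v is a word
  in n^-_{r-1}[t] and x a product of letters x^-_{i,r} (x) t^s, in any order, whose index
  satisfies P.\<close>

abbreviation nminus_span :: "nat \<Rightarrow> (nat \<Rightarrow> nat) \<Rightarrow> ((nat \<Rightarrow> nat) \<times> (nat \<Rightarrow> nat) \<Rightarrow> bool) \<Rightarrow> fa set" where
  "nminus_span r m P \<equiv> fa.span (nminus_xr_words r P \<union> weyl_ideal_gens r m)"

lemma nminus_sub_word_simps [simp]:
  "nminus_sub_word r []"
  "nminus_sub_word r ((a, b, k) # v) \<longleftrightarrow> 1 \<le> b \<and> b < a \<and> a \<le> r \<and> nminus_sub_word r v"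
  "nminus_sub_word r (v1 @ v2) \<longleftrightarrow> nminus_sub_word r v1 \<and> nminus_sub_word r v2"
  by (simp_all add: nminus_sub_word_def ball_Un)

lemma nminus_xr_word_in_span:
  assumes "nminus_sub_word r v" "cols_valid r L" "P (col_index L)"
  shows "word (v @ xr_word r L) \<in> nminus_span r m P"
  using assms unfolding nminus_xr_words_def by (intro fa.span_base UnI1) blast

lemma raising_xr_straightens:
  assumes up: "idx_upclosed r P" and ab: "1 \<le> a" "a < b" "b \<le> r" and v: "nminus_sub_word r v"
  shows "cols_valid r (L1 @ L2) \<Longrightarrow> P (col_index (L1 @ L2)) \<Longrightarrow>
    word ((v @ xr_word r L1) @ (a, b, k) # xr_word r L2) \<in> nminus_span r m P"
proof (induction L2 arbitrary: L1)
  case Nil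
  have "word ((v @ xr_word r L1) @ [(a, b, k)]) \<in> weyl_ideal_gens r m"
    using ab by (intro raising_last_in_ideal_gens) auto
  then show ?case by (simp add: fa.span_base)
next
  case (Cons x L2)
  obtain i s where x: "x = (i, s)" by (cases x)
  have i: "1 \<le> i" "i \<le> r" using Cons.prems x by auto
  let ?u = "v @ xr_word r L1"
  have "word (?u @ (a, b, k) # (r + 1, i, s) # xr_word r L2) \<in> nminus_span r m P"
  proof (rule commute_letters_in_span)
    show "valid_gen r (a, b, k)" "valid_gen r (r + 1, i, s)"
      using ab i by (auto simp: valid_gen_def)
    show "word (?u @ (r + 1, i, s) # (a, b, k) # xr_word r L2) \<in> nminus_span r m P"
      using Cons.IH[of "L1 @ [x]"] Cons.prems x by simp
    show "fa_mult (word ?u) (fa_mult (bracket (a, b, k) (r + 1, i, s)) (word (xr_word r L2)))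
        \<in> nminus_span r m P"
    proof (cases "i = a")
      case True
      then have "P (col_index (L1 @ (b, k + s) # L2))"
        using idx_upclosedD[OF up _ idx_gt_raise_col[OF ab]] Cons.prems x by simp
      then have "word (v @ xr_word r (L1 @ (b, k + s) # L2)) \<in> nminus_span r m P"
        using Cons.prems x ab by (intro nminus_xr_word_in_span[OF v]) auto
      then show ?thesis
        using ab True by (simp add: bracket_between_words fa.span_neg)
    qed (use ab in \<open>simp add: bracket_between_words fa.span_zero\<close>)
  qed
  then show ?case using x by simp
qed

lemma diag_xr_straightens:
  assumes up: "idx_upclosed r P" and ab: "1 \<le> a" "a \<le> r" "1 \<le> b" "b \<le> r"
    and v: "nminus_sub_word r v"
  shows "cols_valid r (L1 @ L2) \<Longrightarrow> P (col_index (L1 @ L2)) \<Longrightarrow>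
    word ((v @ xr_word r L1) @ (a, a, k) # xr_word r L2) - word ((v @ xr_word r L1) @ (b, b, k) # xr_word r L2)
      \<in> nminus_span r m P"
proof (induction L2 arbitrary: L1)
  case Nil
  then have "word (v @ xr_word r L1) \<in> nminus_span r m P"
    by (intro nminus_xr_word_in_span[OF v]) simp_all
  from diag_last_in_span[OF ab this] show ?case
    by (simp only: xr_word_simps(1))
next
  case (Cons x L2)
  obtain i s where x: "x = (i, s)" by (cases x)
  have i: "1 \<le> i" "i \<le> r" using Cons.prems x by auto
  let ?u = "v @ xr_word r L1"
  have "word (?u @ (a, a, k) # (r + 1, i, s) # xr_word r L2) - word (?u @ (b, b, k) # (r + 1, i, s) # xr_word r L2)
      \<in> nminus_span r m P"
  proof (rule commute_letters_diff_in_span)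
    show "valid_gen r (a, a, k)" "valid_gen r (b, b, k)" "valid_gen r (r + 1, i, s)"
      using ab i by (auto simp: valid_gen_def)
    show "word (?u @ (r + 1, i, s) # (a, a, k) # xr_word r L2)
        - word (?u @ (r + 1, i, s) # (b, b, k) # xr_word r L2) \<in> nminus_span r m P"
    proof -
      have "cols_valid r ((L1 @ [x]) @ L2)" "P (col_index ((L1 @ [x]) @ L2))"
        using Cons.prems by simp_all
      from Cons.IH[OF this] show ?thesis
        using x by (simp only: xr_word_simps append_assoc append.simps)
    qed
    have "P (col_index (L1 @ (i, s + k) # L2))"
      using idx_upclosed_raise_deg[OF up i] Cons.prems x by simp
    then have "word (v @ xr_word r (L1 @ (i, s + k) # L2)) \<in> nminus_span r m P"
      using Cons.prems x i by (intro nminus_xr_word_in_span[OF v]) auto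
    then have "fa_mult (word ?u) (fa_mult (bracket (e, e, k) (r + 1, i, s)) (word (xr_word r L2)))
        \<in> nminus_span r m P" if "e \<le> r" for e
      using that by (cases "i = e") (simp_all add: bracket_between_words fa.span_zero fa.span_neg add.commute)
    then show "fa_mult (word ?u) (fa_mult (bracket (a, a, k) (r + 1, i, s)) (word (xr_word r L2)))
        \<in> nminus_span r m P"
      and "fa_mult (word ?u) (fa_mult (bracket (b, b, k) (r + 1, i, s)) (word (xr_word r L2)))
        \<in> nminus_span r m P"
      using ab by auto
  qed
  then show ?case using x by (simp only: xr_word_simps append_assoc)
qed

lemma diag_straightens:
  assumes up: "idx_upclosed r P" and ab: "1 \<le> a" "a \<le> r" "1 \<le> b" "b \<le> r"
    and L: "cols_valid r L" "P (col_index L)"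
  shows "nminus_sub_word r v1 \<Longrightarrow> nminus_sub_word r v2 \<Longrightarrow>
    word (v1 @ (a, a, k) # v2 @ xr_word r L) - word (v1 @ (b, b, k) # v2 @ xr_word r L)
      \<in> nminus_span r m P"
proof (induction v2 arbitrary: v1)
  case Nil
  from diag_xr_straightens[OF up ab Nil(1), of "[]" L] show ?case
    using L by (simp only: xr_word_simps append.simps append_Nil2)
next
  case (Cons c v2)
  obtain c1 c2 l where c: "c = (c1, c2, l)" by (cases c)
  have c12: "1 \<le> c2" "c2 < c1" "c1 \<le> r" using Cons.prems c by auto
  let ?w = "v2 @ xr_word r L"
  have "word (v1 @ (a, a, k) # c # ?w) - word (v1 @ (b, b, k) # c # ?w) \<in> nminus_span r m P"
  proof (rule commute_letters_diff_in_span)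
    show "valid_gen r (a, a, k)" "valid_gen r (b, b, k)" "valid_gen r c"
      using ab c c12 by (auto simp: valid_gen_def)
    have "nminus_sub_word r (v1 @ [c])" "nminus_sub_word r v2"
      using Cons.prems c by simp_all
    from Cons.IH[OF this] show "word (v1 @ c # (a, a, k) # ?w) - word (v1 @ c # (b, b, k) # ?w)
        \<in> nminus_span r m P"
      by (simp only: append_assoc append.simps)
    have "word ((v1 @ (c1, c2, k + l) # v2) @ xr_word r L) \<in> nminus_span r m P"
      using Cons.prems c c12 L by (intro nminus_xr_word_in_span) auto
    then have "fa_mult (word v1) (fa_mult (bracket (e, e, k) c) (word ?w))
        \<in> nminus_span r m P" for e
      using c by (cases "e = c1"; cases "c2 = e")
        (simp_all add: bracket_between_words fa.span_zero fa.span_diff fa.span_neg)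
    then show "fa_mult (word v1) (fa_mult (bracket (a, a, k) c) (word ?w)) \<in> nminus_span r m P"
      and "fa_mult (word v1) (fa_mult (bracket (b, b, k) c) (word ?w))
        \<in> nminus_span r m P" by this+
  qed
  then show ?case by (simp only: append.simps)
qed

lemma raising_straightens:
  assumes up: "idx_upclosed r P" and L: "cols_valid r L" "P (col_index L)"
  shows "nminus_sub_word r v1 \<Longrightarrow> nminus_sub_word r v2 \<Longrightarrow> 1 \<le> a \<Longrightarrow> a < b \<Longrightarrow> b \<le> r \<Longrightarrow>
    word (v1 @ (a, b, k) # v2 @ xr_word r L) \<in> nminus_span r m P"
proof (induction v2 arbitrary: v1 a b k)
  case Nil
  from raising_xr_straightens[OF up Nil(3-5,1), of "[]" L] show ?case
    using L by (simp only: xr_word_simps append.simps append_Nil2)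
next
  case (Cons c v2)
  obtain c1 c2 l where c: "c = (c1, c2, l)" by (cases c)
  have c12: "1 \<le> c2" "c2 < c1" "c1 \<le> r" and v: "nminus_sub_word r (v1 @ [c])" "nminus_sub_word r v2"
    using Cons.prems c by auto
  let ?S = "nminus_span r m P"
  let ?w = "v2 @ xr_word r L"
  have off_diag: "word (v1 @ (x, y, k') # ?w) \<in> ?S"
    if "1 \<le> x" "x \<le> r" "1 \<le> y" "y \<le> r" "x \<noteq> y" for x y k'
  proof (cases "x < y")
    case True
    then show ?thesis using Cons.IH[of v1] Cons.prems c that by simp
  next
    case False
    then have "word ((v1 @ (x, y, k') # v2) @ xr_word r L) \<in> ?S"
      using Cons.prems c that L by (intro nminus_xr_word_in_span) auto
    then show ?thesis by simp
  qed
  have "word (v1 @ (a, b, k) # c # ?w) \<in> ?S"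
  proof (rule commute_letters_in_span)
    show "valid_gen r (a, b, k)" "valid_gen r c"
      using Cons.prems c c12 by (auto simp: valid_gen_def)
    from Cons.IH[OF v Cons.prems(3-5)] show "word (v1 @ c # (a, b, k) # ?w) \<in> ?S"
      by (simp only: append_assoc append.simps)
    show "fa_mult (word v1) (fa_mult (bracket (a, b, k) c) (word ?w)) \<in> ?S"
    proof (cases "b = c1 \<and> c2 = a")
      case True
      then show ?thesis
        using diag_straightens[OF up _ _ _ _ L, of a b v1 v2 "k + l" m] Cons.prems c
        by (simp add: bracket_between_words)
    next
      case False
      then show ?thesis
        using off_diag[of a c2 "k + l"] off_diag[of c1 b "k + l"] Cons.prems c c12
        by (auto simp: bracket_between_words fa.span_zero fa.span_diff fa.span_neg)
    qed
  qed
  then show ?case by (simp only: append.simps)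
qed

lemma g_letter_mult_nminus_span:
  assumes up: "idx_upclosed r P" and ab: "1 \<le> a" "a \<le> r" "1 \<le> b" "b \<le> r" "a \<noteq> b"
    and p: "p \<in> nminus_span r m P"
  shows "fa_mult (word [(a, b, k)]) p \<in> nminus_span r m P"
proof (rule span_mult_left[OF p])
  fix x assume "x \<in> nminus_xr_words r P \<union> weyl_ideal_gens r m"
  then show "fa_mult (word [(a, b, k)]) x \<in> nminus_span r m P"
  proof
    assume "x \<in> nminus_xr_words r P"
    then obtain v L where x: "x = word (v @ xr_word r L)"
      and v: "nminus_sub_word r v" and L: "cols_valid r L" "P (col_index L)"
      unfolding nminus_xr_words_def by blast
    show ?thesis
    proof (cases "a < b")
      case True
      then show ?thesis
        using raising_straightens[OF up L, of "[]" v a b k m] v ab x by (simp add: word_mult)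
    next
      case False
      then have "word (((a, b, k) # v) @ xr_word r L) \<in> nminus_span r m P"
        using v L ab by (intro nminus_xr_word_in_span) auto
      then show ?thesis
        using x by (simp add: word_mult)
    qed
  qed (auto intro: fa.span_base mult_word_weyl_ideal_gens)
qed

lemma g_word_straightens:
  assumes up: "idx_upclosed r P" and L: "cols_valid r L" "P (col_index L)"
  shows "g_sub_word r u \<Longrightarrow>
    word (u @ xr_word r L) \<in> nminus_span r m P"
proof (induction u)
  case Nil
  then show ?case using nminus_xr_word_in_span[of r "[]" L P m] L by simp
next
  case (Cons g u)
  obtain a b k where g: "g = (a, b, k)" by (cases g)
  have "1 \<le> a" "a \<le> r" "1 \<le> b" "b \<le> r" "a \<noteq> b" and "g_sub_word r u"
    using Cons.prems g by (auto simp: g_sub_word_def)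
  then show ?case
    using g_letter_mult_nminus_span[OF up, of a b "word (u @ xr_word r L)" m k] Cons.IH g
    by (simp add: word_mult)
qed

section \<open>Comparison of the two filtrations\<close>

lemma xr_letter_move:
  assumes "cols_valid r L" "1 \<le> i" "i \<le> r"
  shows "word (v @ (r + 1, i, s) # xr_word r L @ w) - word (v @ xr_word r L @ (r + 1, i, s) # w)
    \<in> fa.span (weyl_ideal_gens r m)"
  using assms(1)
proof (induction L arbitrary: v)
  case Nil
  show ?case by (simp only: xr_word_simps append.simps diff_self fa.span_zero)
next
  case (Cons y L)
  obtain j t where y: "y = (j, t)" by (cases y)
  have j: "1 \<le> j" "j \<le> r" and L: "cols_valid r L" using Cons.prems y by auto
  have "word (v @ (r + 1, i, s) # (r + 1, j, t) # xr_word r L @ w)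
      - word (v @ (r + 1, j, t) # (r + 1, i, s) # xr_word r L @ w) \<in> fa.span (weyl_ideal_gens r m)"
    using word_commutator[of r "(r + 1, i, s)" "(r + 1, j, t)" v "xr_word r L @ w" m] assms j
    by (simp add: valid_gen_def bracket_between_words)
  moreover have "word ((v @ [(r + 1, j, t)]) @ (r + 1, i, s) # xr_word r L @ w)
      - word ((v @ [(r + 1, j, t)]) @ xr_word r L @ (r + 1, i, s) # w) \<in> fa.span (weyl_ideal_gens r m)"
    by (rule Cons.IH[OF L])
  ultimately show ?case
    unfolding y by (simp only: xr_word_simps append_assoc append.simps span_diff_trans)
qed

lemma xr_word_perm:
  assumes "cols_valid r L" "mset L = mset L'"
  shows "word (v @ xr_word r L) - word (v @ xr_word r L') \<in> fa.span (weyl_ideal_gens r m)"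
  using assms
proof (induction L arbitrary: v L')
  case Nil
  then have "L' = []" by simp
  then show ?case by (simp only: diff_self fa.span_zero)
next
  case (Cons x L)
  obtain i s where x: "x = (i, s)" by (cases x)
  obtain L1 L2 where L': "L' = L1 @ x # L2"
    using Cons.prems(2) by (metis list.set_intros(1) set_mset_mset split_list)
  have "set L1 \<subseteq> set (x # L)"
    using Cons.prems(2) L' by (metis Un_upper1 set_append set_mset_mset)
  then have L1: "cols_valid r L1"
    using Cons.prems(1) unfolding cols_valid_def by blast
  have i: "1 \<le> i" "i \<le> r" and L: "cols_valid r L"
    using Cons.prems(1) x by auto
  have "word ((v @ [(r + 1, i, s)]) @ xr_word r L) - word ((v @ [(r + 1, i, s)]) @ xr_word r (L1 @ L2))
      \<in> fa.span (weyl_ideal_gens r m)"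
    using Cons.prems(2) L' by (intro Cons.IH[OF L]) simp
  moreover have "word (v @ (r + 1, i, s) # xr_word r L1 @ xr_word r L2)
      - word (v @ xr_word r L1 @ (r + 1, i, s) # xr_word r L2) \<in> fa.span (weyl_ideal_gens r m)"
    by (rule xr_letter_move[OF L1 i])
  ultimately show ?case
    unfolding x L' by (simp only: xr_word_simps append_assoc append.simps span_diff_trans)
qed

definition xr_list :: "nat \<Rightarrow> (nat \<Rightarrow> nat list) \<Rightarrow> (nat \<times> nat) list" where
  "xr_list r S = concat (map (\<lambda>i. map (Pair i) (S i)) [1..<r + 1])"

definition xr_family :: "(nat \<times> nat) list \<Rightarrow> nat \<Rightarrow> nat list" where
  "xr_family L = (\<lambda>i. sort (map snd (filter (\<lambda>p. fst p = i) L)))"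

lemma xr_eq_word: "xr r S = word (xr_word r (xr_list r S))"
  by (simp add: xr_def xr_list_def xr_word_def map_concat comp_def flip: fa_prod_map_letter)

lemma cols_valid_xr_list: "cols_valid r (xr_list r S)"
  by (auto simp: cols_valid_def xr_list_def)

lemma filter_xr_list:
  assumes "1 \<le> i" "i \<le> r"
  shows "filter (\<lambda>p. fst p = i) (xr_list r S) = map (Pair i) (S i)"
proof -
  have "filter (\<lambda>p. fst p = i) (xr_list r S)
      = concat (map (\<lambda>j. map (Pair j) (S j)) (filter (\<lambda>j. j = i) [1..<r + 1]))"
    unfolding xr_list_def filter_concat map_map comp_def
    by (induction r) (auto simp: filter_map comp_def filter_empty_conv)
  also have "filter (\<lambda>j. j = i) [1..<r + 1] = [i]"
    using assms by (induction r) auto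
  finally show ?thesis by simp
qed

lemma col_index_xr_list:
  "agree r (fst (col_index (xr_list r S))) (ell S) \<and> agree r (snd (col_index (xr_list r S))) (degs S)"
  by (auto simp: agree_def col_index_def ell_def degs_def filter_xr_list comp_def)

lemma xr_family_in_Fr: "in_Fr r (xr_family L)"
  by (simp add: in_Fr_def xr_family_def)

lemma index_xr_family: "(ell (xr_family L), degs (xr_family L)) = col_index L"
  by (simp add: ell_def degs_def col_index_def xr_family_def fun_eq_iff flip: sum_mset_sum_list)

lemma mset_xr_list_xr_family:
  assumes "cols_valid r L"
  shows "mset (xr_list r (xr_family L)) = mset L"
proof -
  have "image_mset (Pair i) (image_mset snd (filter_mset (\<lambda>p. fst p = i) M)) = filter_mset (\<lambda>p. fst p = i) M"
    for i and M :: "(nat \<times> nat) multiset"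
    by (induction M) auto
  then have "mset (xr_list r (xr_family L)) = (\<Sum>i\<leftarrow>[1..<r + 1]. filter_mset (\<lambda>p. fst p = i) (mset L))"
    by (simp add: xr_list_def xr_family_def mset_concat comp_def)
  also have "\<dots> = (\<Sum>i\<in>{1..<r + 1}. filter_mset (\<lambda>p. fst p = i) (mset L))"
    by (subst sum_list_distinct_conv_sum_set) (simp_all only: distinct_upt set_upt)
  also have "\<dots> = mset L"
  proof (rule multiset_eqI)
    fix x :: "nat \<times> nat"
    have "count (\<Sum>i\<in>{1..<r + 1}. filter_mset (\<lambda>p. fst p = i) (mset L)) x
        = (if fst x \<in> {1..<r + 1} then count (mset L) x else 0)"
      by (simp add: count_sum sum.delta)
    also have "\<dots> = count (mset L) x"
      using assms by (auto simp: cols_valid_def count_eq_zero_iff)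
    finally show "count (\<Sum>i\<in>{1..<r + 1}. filter_mset (\<lambda>p. fst p = i) (mset L)) x = count (mset L) x" .
  qed
  finally show ?thesis .
qed

lemma idx_upclosed_ge: "idx_upclosed r (\<lambda>j. idx_ge r j i)"
  unfolding idx_upclosed_def using idx_gt_ge_trans idx_ge_iff by blast

lemma idx_upclosed_gt: "idx_upclosed r (\<lambda>j. idx_gt r j i)"
  unfolding idx_upclosed_def using idx_gt_trans by blast

definition filt_gens ::
  "nat \<Rightarrow> (nat \<Rightarrow> gen list \<Rightarrow> bool)
   \<Rightarrow> (nat \<Rightarrow> (nat \<Rightarrow> nat) \<times> (nat \<Rightarrow> nat) \<Rightarrow> (nat \<Rightarrow> nat) \<times> (nat \<Rightarrow> nat) \<Rightarrow> bool)
   \<Rightarrow> (nat \<Rightarrow> nat) \<times> (nat \<Rightarrow> nat) \<Rightarrow> fa set" where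
  "filt_gens r subw rel i =
     {fa_mult (fa_mult (fa_prod (map letter u)) (xr r S)) w_lambda | u S.
        subw r u \<and> in_Fr r S \<and> rel r (ell S, degs S) i}"

lemma filt_eq_span: "filt r m subw rel i = fa.span (filt_gens r subw rel i \<union> weyl_ideal_gens r m)"
  by (simp add: filt_def filt_gens_def weyl_sub_eq_span)

lemma filt_gen_eq_word:
  "fa_mult (fa_mult (fa_prod (map letter u)) (xr r S)) w_lambda = word (u @ xr_word r (xr_list r S))"
  by (simp add: fa_prod_map_letter xr_eq_word w_lambda_def word_mult)

lemma nminus_xr_words_subset_filt:
  "nminus_xr_words r (\<lambda>j. rel r j i) \<subseteq> filt r m nminus_sub_word rel i"
proof
  fix x assume "x \<in> nminus_xr_words r (\<lambda>j. rel r j i)"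
  then obtain v L where x: "x = word (v @ xr_word r L)"
    and v: "nminus_sub_word r v" and L: "cols_valid r L" "rel r (col_index L) i"
    unfolding nminus_xr_words_def by blast
  let ?L' = "xr_list r (xr_family L)"
  have "rel r (ell (xr_family L), degs (xr_family L)) i"
    using L(2) by (simp only: index_xr_family)
  then have "fa_mult (fa_mult (fa_prod (map letter v)) (xr r (xr_family L))) w_lambda
      \<in> filt_gens r nminus_sub_word rel i"
    unfolding filt_gens_def using v xr_family_in_Fr by blast
  then have "word (v @ xr_word r ?L') \<in> filt r m nminus_sub_word rel i"
    unfolding filt_eq_span filt_gen_eq_word by (intro fa.span_base UnI1)
  moreover have "x - word (v @ xr_word r ?L') \<in> fa.span (weyl_ideal_gens r m)"
    unfolding x by (rule xr_word_perm[OF L(1) mset_xr_list_xr_family[OF L(1), symmetric]])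
  then have "x - word (v @ xr_word r ?L') \<in> filt r m nminus_sub_word rel i"
    unfolding filt_eq_span using fa.span_mono[of "weyl_ideal_gens r m"] by blast
  ultimately show "x \<in> filt r m nminus_sub_word rel i"
    unfolding filt_eq_span by (rule span_of_diff[rotated])
qed

lemma filt_gens_g_subset_nminus_span:
  assumes up: "idx_upclosed r (\<lambda>j. rel r j i)"
    and agree: "\<And>j j'. agree r (fst j) (fst j') \<Longrightarrow> agree r (snd j) (snd j') \<Longrightarrow> rel r j i \<Longrightarrow> rel r j' i"
  shows "filt_gens r g_sub_word rel i \<subseteq> nminus_span r m (\<lambda>j. rel r j i)"
proof
  fix x assume "x \<in> filt_gens r g_sub_word rel i"
  then obtain u S where x: "x = word (u @ xr_word r (xr_list r S))"
    and u: "g_sub_word r u" and S: "rel r (ell S, degs S) i"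
    unfolding filt_gens_def filt_gen_eq_word by blast
  have "agree r (fst (ell S, degs S)) (fst (col_index (xr_list r S)))"
    and "agree r (snd (ell S, degs S)) (snd (col_index (xr_list r S)))"
    using col_index_xr_list agree_sym by simp_all
  then have "rel r (col_index (xr_list r S)) i"
    using S by (rule agree)
  then show "x \<in> nminus_span r m (\<lambda>j. rel r j i)"
    unfolding x by (rule g_word_straightens[OF up cols_valid_xr_list _ u])
qed

lemma nminus_imp_g_sub_word: "nminus_sub_word r u \<Longrightarrow> g_sub_word r u"
  unfolding nminus_sub_word_def g_sub_word_def by fastforce

lemma filt_g_eq_nminus:
  assumes up: "idx_upclosed r (\<lambda>j. rel r j i)"
    and agree: "\<And>j j'. agree r (fst j) (fst j') \<Longrightarrow> agree r (snd j) (snd j') \<Longrightarrow> rel r j i \<Longrightarrow> rel r j' i"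
  shows "filt r m g_sub_word rel i = filt r m nminus_sub_word rel i"
proof
  have "filt_gens r g_sub_word rel i \<subseteq> nminus_span r m (\<lambda>j. rel r j i)"
    by (rule filt_gens_g_subset_nminus_span[of r rel i m, OF up], rule agree, assumption+)
  then have "filt_gens r g_sub_word rel i \<union> weyl_ideal_gens r m
      \<subseteq> nminus_span r m (\<lambda>j. rel r j i)"
    using fa.span_superset[of "nminus_xr_words r (\<lambda>j. rel r j i) \<union> weyl_ideal_gens r m"] by blast
  then have "filt r m g_sub_word rel i \<subseteq> nminus_span r m (\<lambda>j. rel r j i)"
    unfolding filt_eq_span by (rule fa.span_minimal) simp
  also have "nminus_span r m (\<lambda>j. rel r j i) \<subseteq> filt r m nminus_sub_word rel i"
    unfolding filt_eq_span
  proof (rule fa.span_minimal)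
    show "nminus_xr_words r (\<lambda>j. rel r j i) \<union> weyl_ideal_gens r m
        \<subseteq> fa.span (filt_gens r nminus_sub_word rel i \<union> weyl_ideal_gens r m)"
      using nminus_xr_words_subset_filt[of r rel i m]
        fa.span_superset[of "filt_gens r nminus_sub_word rel i \<union> weyl_ideal_gens r m"]
      unfolding filt_eq_span by blast
  qed simp
  finally show "filt r m g_sub_word rel i \<subseteq> filt r m nminus_sub_word rel i" .
  have "filt_gens r nminus_sub_word rel i \<subseteq> filt_gens r g_sub_word rel i"
    unfolding filt_gens_def using nminus_imp_g_sub_word by blast
  then show "filt r m nminus_sub_word rel i \<subseteq> filt r m g_sub_word rel i"
    unfolding filt_eq_span by (intro fa.span_mono Un_mono) simp_all
qed

theorem proposition3p2:
  fixes r :: nat and m :: "nat \<Rightarrow> nat" and i :: "(nat \<Rightarrow> nat) \<times> (nat \<Rightarrow> nat)"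
  assumes "r \<ge> 2"
  shows "W_ge r m i = Un_ge r m i \<and> W_gt r m i = Un_gt r m i"
proof
  show "W_ge r m i = Un_ge r m i"
    by (rule filt_g_eq_nminus[of r idx_ge i, OF idx_upclosed_ge], rule idx_ge_agree, assumption+)
  show "W_gt r m i = Un_gt r m i"
    by (rule filt_g_eq_nminus[of r idx_gt i, OF idx_upclosed_gt], rule idx_gt_agree, assumption+)
qed

end
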